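(* With $\mathcal{E}=\mathcal{E}nd_\Gamma(\mathcal{P})$, $\delta$, $\sigma$ and ${}^{\sigma}\mathcal{E}$ as in the context: (1) if $x\in{}^{\sigma}\mathcal{E}$ is homogeneous, then $\sigma\circ\delta(x)=(-1)^{|\sigma|(|x|+1)}\delta(x)\circ\sigma$; (2) ${}^{\sigma}\mathcal{E}$ is a DG-subalgebra of $\mathcal{E}$.
   Context: $k$ is a field, $\Gamma$ a $k$-algebra (right modules), $M$ a $\Gamma$-module, $n\ge1$. We are given a complex of finitely generated projective $\Gamma$-modules $\mathrm{P}=(0\to P_{n-1}\xrightarrow{d_{n-1}}\cdots\xrightarrow{d_1}P_0\to 0)$, $P_i$ in degree $-i$, and maps $\alpha\colon P_0\to M$, $\beta\colon M\to P_{n-1}$ with $0\to M\xrightarrow{\beta}P_{n-1}\to\cdots\to P_0\xrightarrow{\alpha}M\to 0$ exact; $d_0=\beta\circ\alpha$. $\mathcal{P}$ is the complex whose component in degree $-(\ell n+i)$ ($\ell\ge0$, $0\le i\le n-1$) is a copy of $P_i$ (the $\ell$-th copy), with differential $(-1)^{\ell n}d_i$ from the $\ell$-th copy of $P_i$ to the $\ell$-th copy of $P_{i-1}$ ($i\ge1$) and $(-1)^{\ell n}d_0$ from the $(\ell+1)$-th copy of $P_0$ to the $\ell$-th copy of $P_{n-1}$. $\mathcal{E}=\mathcal{E}nd_\Gamma(\mathcal{P})$ is the DG endomorphism algebra (degree $i$ part: all collections of maps $\mathcal{P}^j\to\mathcal{P}^{j+i}$; product composition; differential $\delta(f)=d_{\mathcal{P}}\circ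 f-(-1)^{|f|}f\circ d_{\mathcal{P}}$). $\sigma\in\mathcal{E}^n$ is the identity from the $\ell$-th copy of $P_i$ to the $(\ell-1)$-th copy for $\ell\ge1$ and zero on the $0$-th copy; $|\sigma|=n$. ${}^{\sigma}\mathcal{E}=\bigoplus_i{}^{\sigma}\mathcal{E}^i$ with ${}^{\sigma}\mathcal{E}^i=\{x\in\mathcal{E}^i:\sigma\circ x=(-1)^{|\sigma||x|}x\circ\sigma\}$. *)

theory Defs
  imports Main "HOL-Library.Function_Algebras"
begin

section \<open>Right modules over a ring, all living inside one ambient additive type\<close>

text \<open>The ring Gamma is a type 'r of class ring_1 (Gamma = UNIV).\<close>

definition rmodule :: "'m::ab_group_add set \<Rightarrow> ('m \<Rightarrow> 'r::ring_1 \<Rightarrow> 'm) \<Rightarrow> bool" where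
  "rmodule A act \<longleftrightarrow> 0 \<in> A \<and> (\<forall>x\<in>A. \<forall>y\<in>A. x + y \<in> A) \<and> (\<forall>x\<in>A. - x \<in> A)
     \<and> (\<forall>x\<in>A. \<forall>r. act x r \<in> A) \<and> (\<forall>x\<in>A. act x 1 = x)
     \<and> (\<forall>x\<in>A. \<forall>r s. act (act x r) s = act x (r * s))
     \<and> (\<forall>x\<in>A. \<forall>y\<in>A. \<forall>r. act (x + y) r = act x r + act y r)
     \<and> (\<forall>x\<in>A. \<forall>r s. act x (r + s) = act x r + act x s)"

definition rhom :: "'m::ab_group_add set \<Rightarrow> ('m \<Rightarrow> 'r::ring_1 \<Rightarrow> 'm)
     \<Rightarrow> 'n::ab_group_add set \<Rightarrow> ('n \<Rightarrow> 'r \<Rightarrow> 'n) \<Rightarrow> ('m \<Rightarrow> 'n) \<Rightarrow> bool" where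
  "rhom A a B b f \<longleftrightarrow> f ` A \<subseteq> B \<and> (\<forall>x\<in>A. \<forall>y\<in>A. f (x + y) = f x + f y)
     \<and> (\<forall>x\<in>A. \<forall>r. f (a x r) = b (f x) r) \<and> (\<forall>x. x \<notin> A \<longrightarrow> f x = 0)"

text \<open>The free right module Gamma^n (column vectors, right action by multiplication).\<close>
definition free_carrier :: "nat \<Rightarrow> (nat \<Rightarrow> 'r::ring_1) set" where
  "free_carrier n = {v. \<forall>i\<ge>n. v i = 0}"

definition free_act :: "(nat \<Rightarrow> 'r::ring_1) \<Rightarrow> 'r \<Rightarrow> (nat \<Rightarrow> 'r)" where
  "free_act v r = (\<lambda>i. v i * r)"

text \<open>Finitely generated projective: a direct summand of some Gamma^n.\<close>
definition fg_projective :: "'m::ab_group_add set \<Rightarrow> ('m \<Rightarrow> 'r::ring_1 \<Rightarrow> 'm) \<Rightarrow> bool" where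
  "fg_projective A act \<longleftrightarrow> rmodule A act \<and>
     (\<exists>n (s :: 'm \<Rightarrow> nat \<Rightarrow> 'r) p. rhom A act (free_carrier n) free_act s
        \<and> rhom (free_carrier n) free_act A act p \<and> (\<forall>x\<in>A. p (s x) = x))"

definition k_algebra :: "('k::field \<Rightarrow> 'r::ring_1) \<Rightarrow> bool" where
  "k_algebra \<iota> \<longleftrightarrow> \<iota> 1 = 1 \<and> (\<forall>a b. \<iota> (a + b) = \<iota> a + \<iota> b) \<and> (\<forall>a b. \<iota> (a * b) = \<iota> a * \<iota> b)
     \<and> (\<forall>a g. \<iota> a * g = g * \<iota> a)"

section \<open>The exact sequence 0 -> M -> P_{n-1} -> ... -> P_0 -> M -> 0\<close>

definition exact_data ::
  "nat \<Rightarrow> ('m::ab_group_add \<Rightarrow> 'r::ring_1 \<Rightarrow> 'm) \<Rightarrow> 'm set \<Rightarrow> (nat \<Rightarrow> 'm set) \<Rightarrow> (nat \<Rightarrow> 'm \<Rightarrow> 'm)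
     \<Rightarrow> ('m \<Rightarrow> 'm) \<Rightarrow> ('m \<Rightarrow> 'm) \<Rightarrow> bool" where
  "exact_data n act M P d \<alpha> \<beta> \<longleftrightarrow>
     \<comment> \<open>injectivity of beta (exactness at the left M)\<close>
     (\<forall>x\<in>M. \<beta> x = 0 \<longrightarrow> x = 0)
     \<comment> \<open>exactness at each P_i: kernel of the outgoing map = image of the incoming map\<close>
   \<and> (\<forall>i<n. {x \<in> P i. (if i = 0 then \<alpha> else d i) x = 0}
              = (if i = n - 1 then \<beta> ` M else d (i + 1) ` P (i + 1)))
     \<comment> \<open>surjectivity of alpha (exactness at the right M)\<close>
   \<and> \<alpha> ` P 0 = M"

section \<open>The complex P-cal, indexed by j = -(degree) :: int\<close>

definition sgn_app :: "int \<Rightarrow> 'm::ab_group_add \<Rightarrow> 'm" where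
  "sgn_app k y = (if even k then y else - y)"

text \<open>Component of P-cal in degree -j: the copy of P_(j mod n), and the zero module for j < 0.\<close>
definition PP :: "nat \<Rightarrow> (nat \<Rightarrow> 'm::ab_group_add set) \<Rightarrow> int \<Rightarrow> 'm set" where
  "PP n P j = (if j < 0 then {0} else P (nat (j mod int n)))"

text \<open>Differential of P-cal from degree -j to degree -j+1.  Writing j = l n + i:
  for i \<ge> 1 it is (-1)^(l n) d_i; for i = 0, j = (l+1) n with l \<ge> 0, it is (-1)^(l n) d_0
  where d_0 = beta o alpha; for j \<le> 0 it is zero.\<close>
definition dP :: "nat \<Rightarrow> (nat \<Rightarrow> 'm::ab_group_add set) \<Rightarrow> (nat \<Rightarrow> 'm \<Rightarrow> 'm)
     \<Rightarrow> ('m \<Rightarrow> 'm) \<Rightarrow> ('m \<Rightarrow> 'm) \<Rightarrow> int \<Rightarrow> 'm \<Rightarrow> 'm" where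
  "dP n P d \<alpha> \<beta> j x =
     (if j \<le> 0 \<or> x \<notin> PP n P j then 0
      else if j mod int n \<noteq> 0 then sgn_app (int n * (j div int n)) (d (nat (j mod int n)) x)
      else sgn_app (int n * (j div int n - 1)) (\<beta> (\<alpha> x)))"

section \<open>The DG endomorphism algebra E-cal = End_Gamma(P-cal)\<close>

text \<open>A homogeneous element of degree e is a family f of maps, f j : P-cal^(-j) -> P-cal^(-j+e),
  i.e. from PP j to PP (j - e), each Gamma-linear (and extensional).\<close>
definition Ehom :: "nat \<Rightarrow> ('m \<Rightarrow> 'r::ring_1 \<Rightarrow> 'm) \<Rightarrow> (nat \<Rightarrow> 'm::ab_group_add set)
     \<Rightarrow> int \<Rightarrow> (int \<Rightarrow> 'm \<Rightarrow> 'm) \<Rightarrow> bool" where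
  "Ehom n act P e f \<longleftrightarrow> (\<forall>j. rhom (PP n P j) act (PP n P (j - e)) act (f j))"

text \<open>Product (composition) f o g, where g is homogeneous of degree b.\<close>
definition ecomp :: "int \<Rightarrow> (int \<Rightarrow> 'm \<Rightarrow> 'm) \<Rightarrow> (int \<Rightarrow> 'm \<Rightarrow> 'm) \<Rightarrow> (int \<Rightarrow> 'm \<Rightarrow> 'm)" where
  "ecomp b f g = (\<lambda>j. f (j - b) \<circ> g j)"

definition eadd :: "(int \<Rightarrow> 'm \<Rightarrow> 'm::ab_group_add) \<Rightarrow> (int \<Rightarrow> 'm \<Rightarrow> 'm) \<Rightarrow> (int \<Rightarrow> 'm \<Rightarrow> 'm)" where
  "eadd f g = (\<lambda>j x. f j x + g j x)"

definition ezero :: "int \<Rightarrow> 'm \<Rightarrow> 'm::ab_group_add" where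
  "ezero = (\<lambda>j x. 0)"

definition esmult :: "('m \<Rightarrow> 'r \<Rightarrow> 'm) \<Rightarrow> ('k \<Rightarrow> 'r) \<Rightarrow> 'k \<Rightarrow> (int \<Rightarrow> 'm \<Rightarrow> 'm) \<Rightarrow> (int \<Rightarrow> 'm \<Rightarrow> 'm)" where
  "esmult act \<iota> c f = (\<lambda>j x. act (f j x) (\<iota> c))"

definition esgn :: "int \<Rightarrow> (int \<Rightarrow> 'm \<Rightarrow> 'm::ab_group_add) \<Rightarrow> (int \<Rightarrow> 'm \<Rightarrow> 'm)" where
  "esgn k f = (\<lambda>j x. sgn_app k (f j x))"

definition eid :: "nat \<Rightarrow> (nat \<Rightarrow> 'm::ab_group_add set) \<Rightarrow> int \<Rightarrow> 'm \<Rightarrow> 'm" where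
  "eid n P = (\<lambda>j x. if x \<in> PP n P j then x else 0)"

text \<open>Differential delta(f) = d o f - (-1)^|f| f o d for f homogeneous of degree e.\<close>
definition edelta :: "nat \<Rightarrow> (nat \<Rightarrow> 'm::ab_group_add set) \<Rightarrow> (nat \<Rightarrow> 'm \<Rightarrow> 'm)
     \<Rightarrow> ('m \<Rightarrow> 'm) \<Rightarrow> ('m \<Rightarrow> 'm) \<Rightarrow> int \<Rightarrow> (int \<Rightarrow> 'm \<Rightarrow> 'm) \<Rightarrow> (int \<Rightarrow> 'm \<Rightarrow> 'm)" where
  "edelta n P d \<alpha> \<beta> e f =
     (\<lambda>j x. dP n P d \<alpha> \<beta> (j - e) (f j x) - sgn_app e (f (j - 1) (dP n P d \<alpha> \<beta> j x)))"

text \<open>sigma (degree n): identity from the l-th copy of P_i to the (l-1)-th copy for l \<ge> 1,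
  i.e. from index j = l n + i to j - n, and zero on the 0-th copy (j < n).\<close>
definition esigma :: "nat \<Rightarrow> (nat \<Rightarrow> 'm::ab_group_add set) \<Rightarrow> int \<Rightarrow> 'm \<Rightarrow> 'm" where
  "esigma n P = (\<lambda>j x. if j \<ge> int n \<and> x \<in> PP n P j then x else 0)"

definition sigE :: "nat \<Rightarrow> ('m \<Rightarrow> 'r::ring_1 \<Rightarrow> 'm) \<Rightarrow> (nat \<Rightarrow> 'm::ab_group_add set)
     \<Rightarrow> int \<Rightarrow> (int \<Rightarrow> 'm \<Rightarrow> 'm) set" where
  "sigE n act P e = {f. Ehom n act P e f \<and>
     ecomp e (esigma n P) f = esgn (int n * e) (ecomp (int n) f (esigma n P))}"

end

theory Submission
  imports Defs
begin

text \<open>The differential of P-cal on the l-th copy is (-1)^(l n) times the one on the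
  (l-1)-th copy, so the shift sigma commutes with it up to a sign:
  sigma o d = (-1)^|sigma| d o sigma.  Feeding this into delta(x) = d o x - (-1)^|x| x o d
  for x in sigma-E gives (1), and with it closure of sigma-E under delta; closure under
  sums, scalars, the identity and composition is bookkeeping of signs.\<close>

lemma rmodule_zero_mem: "rmodule A act \<Longrightarrow> 0 \<in> A"
  by (simp add: rmodule_def)

lemma rmodule_add_mem: "rmodule A act \<Longrightarrow> x \<in> A \<Longrightarrow> y \<in> A \<Longrightarrow> x + y \<in> A"
  by (simp add: rmodule_def)

lemma rmodule_uminus_mem: "rmodule A act \<Longrightarrow> x \<in> A \<Longrightarrow> - x \<in> A"
  by (simp add: rmodule_def)

lemma rmodule_diff_mem: "rmodule A act \<Longrightarrow> x \<in> A \<Longrightarrow> y \<in> A \<Longrightarrow> x - y \<in> A"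
  using rmodule_add_mem[of A act x "- y"] rmodule_uminus_mem[of A act y] by simp

lemma rmodule_act_mem: "rmodule A act \<Longrightarrow> x \<in> A \<Longrightarrow> act x r \<in> A"
  by (simp add: rmodule_def)

lemma rmodule_act_zero:
  assumes "rmodule A act"
  shows "act 0 r = 0"
proof -
  have "act (0 + 0) r = act 0 r + act 0 r"
    using assms rmodule_zero_mem[OF assms] unfolding rmodule_def by blast
  then show ?thesis by simp
qed

lemma rmodule_act_uminus:
  assumes "rmodule A act" "x \<in> A"
  shows "act (- x) r = - act x r"
proof -
  have "act (x + - x) r = act x r + act (- x) r"
    using assms rmodule_uminus_mem[OF assms] unfolding rmodule_def by blast
  then show ?thesis
    using rmodule_act_zero[OF assms(1)] by (simp add: eq_neg_iff_add_eq_0 add.commute)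
qed

lemma rmodule_act_diff:
  assumes "rmodule A act" "x \<in> A" "y \<in> A"
  shows "act (x - y) r = act x r - act y r"
proof -
  have "act (x + - y) r = act x r + act (- y) r"
    using assms rmodule_uminus_mem[OF assms(1,3)] unfolding rmodule_def by blast
  then show ?thesis using rmodule_act_uminus[OF assms(1,3)] by simp
qed

lemma rhom_zero: "rhom A a B b f \<Longrightarrow> 0 \<in> A \<Longrightarrow> f 0 = 0"
proof -
  assume "rhom A a B b f" "0 \<in> A"
  then have "f (0 + 0) = f 0 + f 0" unfolding rhom_def by blast
  then show ?thesis by simp
qed

lemma rhom_mem: "rhom A a B b f \<Longrightarrow> 0 \<in> B \<Longrightarrow> f x \<in> B"
  unfolding rhom_def by (cases "x \<in> A") auto

lemma rhom_add: "rhom A a B b f \<Longrightarrow> x \<in> A \<Longrightarrow> y \<in> A \<Longrightarrow> f (x + y) = f x + f y"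
  unfolding rhom_def by auto

lemma rhom_act: "rhom A a B b f \<Longrightarrow> x \<in> A \<Longrightarrow> f (a x r) = b (f x) r"
  unfolding rhom_def by auto

lemma rhom_outside: "rhom A a B b f \<Longrightarrow> x \<notin> A \<Longrightarrow> f x = 0"
  unfolding rhom_def by auto

lemma rhom_uminus:
  assumes "rhom A a B b f" "rmodule A a" "x \<in> A"
  shows "f (- x) = - f x"
proof -
  have "f (x + - x) = f x + f (- x)"
    using rhom_add[OF assms(1) assms(3) rmodule_uminus_mem[OF assms(2,3)]] .
  then show ?thesis
    using rhom_zero[OF assms(1) rmodule_zero_mem[OF assms(2)]]
    by (simp add: eq_neg_iff_add_eq_0 add.commute)
qed

lemma rhom_diff:
  assumes "rhom A a B b f" "rmodule A a" "x \<in> A" "y \<in> A"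
  shows "f (x - y) = f x - f y"
  using rhom_add[OF assms(1) assms(3) rmodule_uminus_mem[OF assms(2,4)]]
    rhom_uminus[OF assms(1,2,4)] by simp

lemma rhom_comp:
  assumes "rhom A a B a g" "rhom B a C a f" "rmodule B a"
  shows "rhom A a C a (f \<circ> g)"
  using assms rhom_zero[OF assms(2) rmodule_zero_mem[OF assms(3)]]
  unfolding rhom_def by (auto simp: image_subset_iff)

lemma rhom_const_zero: "rmodule B a \<Longrightarrow> rhom A a B a (\<lambda>x. 0)"
  unfolding rhom_def by (auto simp: rmodule_zero_mem rmodule_act_zero)

lemma rhom_restrict_id: "rmodule A a \<Longrightarrow> rhom A a A a (\<lambda>x. if x \<in> A then x else 0)"
  unfolding rhom_def by (auto simp: rmodule_add_mem rmodule_act_mem rmodule_zero_mem)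

lemma rhom_add_fun:
  assumes "rhom A a B a f" "rhom A a B a g" "rmodule B a"
  shows "rhom A a B a (\<lambda>x. f x + g x)"
  using assms unfolding rhom_def
  by (auto simp: image_subset_iff rmodule_add_mem algebra_simps rmodule_def)

lemma rhom_diff_fun:
  assumes "rhom A a B a f" "rhom A a B a g" "rmodule B a"
  shows "rhom A a B a (\<lambda>x. f x - g x)"
  using assms unfolding rhom_def
  by (auto simp: image_subset_iff rmodule_diff_mem rmodule_act_diff algebra_simps)

lemma rhom_act_central:
  assumes f: "rhom A a B a f" and B: "rmodule B a" and central: "\<forall>g. t * g = g * t"
  shows "rhom A a B a (\<lambda>x. a (f x) t)"
proof -
  have f_mem: "\<And>x. f x \<in> B" using rhom_mem[OF f rmodule_zero_mem[OF B]] .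
  show ?thesis unfolding rhom_def
  proof (intro conjI ballI allI impI)
    show "(\<lambda>x. a (f x) t) ` A \<subseteq> B" using f_mem rmodule_act_mem[OF B] by auto
  next
    fix x y assume "x \<in> A" "y \<in> A"
    then show "a (f (x + y)) t = a (f x) t + a (f y) t"
      using rhom_add[OF f] f_mem B unfolding rmodule_def by simp
  next
    fix x r assume x: "x \<in> A"
    have "a (f (a x r)) t = a (f x) (r * t)"
      using rhom_act[OF f x] B f_mem unfolding rmodule_def by simp
    also have "\<dots> = a (a (f x) t) r"
      using central B f_mem unfolding rmodule_def by simp
    finally show "a (f (a x r)) t = a (a (f x) t) r" .
  next
    fix x assume "x \<notin> A"
    then show "a (f x) t = 0" using rhom_outside[OF f] rmodule_act_zero[OF B] by simp
  qed
qed

lemma sgn_app_add: "sgn_app (k + l) y = sgn_app k (sgn_app l y)"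
  by (simp add: sgn_app_def)

lemma sgn_app_zero: "sgn_app k 0 = 0"
  by (simp add: sgn_app_def)

lemma sgn_app_plus: "sgn_app k (x + y) = sgn_app k x + sgn_app k y"
  by (simp add: sgn_app_def)

lemma sgn_app_minus: "sgn_app k (x - y) = sgn_app k x - sgn_app k y"
  by (simp add: sgn_app_def)

lemma sgn_app_cong_parity: "even k = even l \<Longrightarrow> sgn_app k y = sgn_app l y"
  by (simp add: sgn_app_def)

lemma sgn_app_mem: "rmodule A a \<Longrightarrow> y \<in> A \<Longrightarrow> sgn_app k y \<in> A"
  by (simp add: sgn_app_def rmodule_uminus_mem)

lemma sgn_app_act: "rmodule A a \<Longrightarrow> y \<in> A \<Longrightarrow> a (sgn_app k y) r = sgn_app k (a y r)"
  by (simp add: sgn_app_def rmodule_act_uminus)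

lemma rhom_sgn_app:
  "rhom A a B b f \<Longrightarrow> rmodule A a \<Longrightarrow> y \<in> A \<Longrightarrow> f (sgn_app k y) = sgn_app k (f y)"
  by (simp add: sgn_app_def rhom_uminus)

lemma rhom_sgn_app_fun:
  assumes "rhom A a B a f" "rmodule B a"
  shows "rhom A a B a (\<lambda>x. sgn_app k (f x))"
  using assms unfolding rhom_def
  by (auto simp: sgn_app_mem sgn_app_zero sgn_app_plus sgn_app_act image_subset_iff)

lemma mod_diff_1_nonzero:
  assumes "(m::int) > 0" "j mod m \<noteq> 0"
  shows "(j - 1) mod m = j mod m - 1"
proof -
  have "0 < j mod m" "j mod m < m"
    using assms pos_mod_sign[of m j] pos_mod_bound[of m j] by linarith+
  then have "(j mod m - 1) mod m = j mod m - 1" by (simp add: mod_pos_pos_trivial)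
  then show ?thesis by (simp add: mod_diff_left_eq)
qed

lemma mod_diff_1_zero: "(m::int) > 0 \<Longrightarrow> j mod m = 0 \<Longrightarrow> (j - 1) mod m = m - 1"
  by (metis diff_0 mod_diff_left_eq zmod_minus1)

lemma div_diff_self: "(m::int) \<noteq> 0 \<Longrightarrow> (j - m) div m = j div m - 1"
  by (metis diff_conv_add_uminus div_mult_self2 mult_minus1_right uminus_add_conv_diff)

locale periodic_graded_module =
  fixes n :: nat and act :: "'m::ab_group_add \<Rightarrow> 'r::ring_1 \<Rightarrow> 'm" and P :: "nat \<Rightarrow> 'm set"
  assumes n_pos: "n \<ge> 1"
    and P_rmodule: "\<forall>i<n. rmodule (P i) act"
begin

lemma PP_rmodule: "rmodule (PP n P j) act"
proof (cases "j < 0")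
  case True
  have "act 0 r = 0" for r
    using rmodule_act_zero P_rmodule n_pos by (metis less_le_trans zero_less_one)
  then show ?thesis using True by (simp add: PP_def rmodule_def)
next
  case False
  have "nat (j mod int n) < n" using n_pos by (simp add: nat_less_iff)
  then show ?thesis using False P_rmodule by (simp add: PP_def)
qed

lemma PP_diff_period: "j \<ge> int n \<Longrightarrow> PP n P (j - int n) = PP n P j"
  by (simp add: PP_def mod_diff_right_eq[symmetric])

lemma esigma_rhom: "rhom (PP n P j) act (PP n P (j - int n)) act (esigma n P j)"
proof (cases "j \<ge> int n")
  case True
  then show ?thesis using PP_rmodule[of j] unfolding rhom_def esigma_def PP_diff_period[OF True]
    by (auto simp: rmodule_add_mem rmodule_act_mem)
next
  case False
  then show ?thesis
    using rhom_const_zero[OF PP_rmodule[of "j - int n"]] by (simp add: esigma_def[abs_def])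
qed

lemma esigma_mem: "esigma n P j x \<in> PP n P (j - int n)"
  by (rule rhom_mem[OF esigma_rhom rmodule_zero_mem[OF PP_rmodule]])

lemma esigma_zero: "esigma n P j 0 = 0"
  by (simp add: esigma_def)

lemma Ehom_rhom: "Ehom n act P e f \<Longrightarrow> rhom (PP n P j) act (PP n P (j - e)) act (f j)"
  by (simp add: Ehom_def)

lemma Ehom_mem: "Ehom n act P e f \<Longrightarrow> f j x \<in> PP n P (j - e)"
  by (rule rhom_mem[OF Ehom_rhom rmodule_zero_mem[OF PP_rmodule]])

lemma sigE_iff:
  "f \<in> sigE n act P e \<longleftrightarrow> Ehom n act P e f \<and>
     (\<forall>j x. esigma n P (j - e) (f j x) = sgn_app (int n * e) (f (j - int n) (esigma n P j x)))"
  by (auto simp: sigE_def ecomp_def esgn_def fun_eq_iff)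

lemma sigE_ezero: "ezero \<in> sigE n act P e"
  unfolding sigE_iff Ehom_def using rhom_const_zero[OF PP_rmodule]
  by (simp add: ezero_def esigma_zero sgn_app_zero)

lemma sigE_eadd:
  assumes "f \<in> sigE n act P e" "g \<in> sigE n act P e"
  shows "eadd f g \<in> sigE n act P e"
proof -
  from assms have f: "Ehom n act P e f" and g: "Ehom n act P e g"
    and f_comm: "\<And>j y. esigma n P (j - e) (f j y) = sgn_app (int n * e) (f (j - int n) (esigma n P j y))"
    and g_comm: "\<And>j y. esigma n P (j - e) (g j y) = sgn_app (int n * e) (g (j - int n) (esigma n P j y))"
    by (auto simp: sigE_iff)
  have "Ehom n act P e (eadd f g)" unfolding Ehom_def eadd_def
    using rhom_add_fun[OF Ehom_rhom[OF f] Ehom_rhom[OF g] PP_rmodule] by blast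
  moreover have "esigma n P (j - e) (eadd f g j y)
      = sgn_app (int n * e) (eadd f g (j - int n) (esigma n P j y))" for j y
    unfolding eadd_def rhom_add[OF esigma_rhom Ehom_mem[OF f] Ehom_mem[OF g]] f_comm g_comm
      sgn_app_plus ..
  ultimately show ?thesis by (simp add: sigE_iff)
qed

lemma sigE_esmult:
  assumes alg: "k_algebra \<iota>" and "f \<in> sigE n act P e"
  shows "esmult act \<iota> c f \<in> sigE n act P e"
proof -
  from assms(2) have f: "Ehom n act P e f"
    and f_comm: "\<And>j y. esigma n P (j - e) (f j y) = sgn_app (int n * e) (f (j - int n) (esigma n P j y))"
    by (auto simp: sigE_iff)
  have "\<forall>g. \<iota> c * g = g * \<iota> c" using alg by (simp add: k_algebra_def)
  then have "Ehom n act P e (esmult act \<iota> c f)" unfolding Ehom_def esmult_def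
    using rhom_act_central[OF Ehom_rhom[OF f] PP_rmodule] by blast
  moreover have "esigma n P (j - e) (esmult act \<iota> c f j y)
      = sgn_app (int n * e) (esmult act \<iota> c f (j - int n) (esigma n P j y))" for j y
  proof -
    have "esigma n P (j - e) (act (f j y) (\<iota> c)) = act (esigma n P (j - e) (f j y)) (\<iota> c)"
      using rhom_act[OF esigma_rhom Ehom_mem[OF f]] .
    also have "\<dots> = sgn_app (int n * e) (act (f (j - int n) (esigma n P j y)) (\<iota> c))"
      unfolding f_comm by (rule sgn_app_act[OF PP_rmodule Ehom_mem[OF f]])
    finally show ?thesis by (simp add: esmult_def)
  qed
  ultimately show ?thesis by (simp add: sigE_iff)
qed

lemma sigE_eid: "eid n P \<in> sigE n act P 0"
proof -
  have "Ehom n act P 0 (eid n P)"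
    unfolding Ehom_def eid_def using rhom_restrict_id[OF PP_rmodule] by simp
  moreover have "esigma n P j (eid n P j y) = eid n P (j - int n) (esigma n P j y)" for j y
    using esigma_mem[of j y] by (auto simp: eid_def esigma_def)
  ultimately show ?thesis by (simp add: sigE_iff sgn_app_def)
qed

lemma sigE_ecomp:
  assumes "f \<in> sigE n act P a" "g \<in> sigE n act P b"
  shows "ecomp b f g \<in> sigE n act P (a + b)"
proof -
  from assms have f: "Ehom n act P a f" and g: "Ehom n act P b g"
    and f_comm: "\<And>j y. esigma n P (j - a) (f j y) = sgn_app (int n * a) (f (j - int n) (esigma n P j y))"
    and g_comm: "\<And>j y. esigma n P (j - b) (g j y) = sgn_app (int n * b) (g (j - int n) (esigma n P j y))"
    by (auto simp: sigE_iff)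
  have "Ehom n act P (a + b) (ecomp b f g)"
    unfolding Ehom_def ecomp_def
    using rhom_comp[OF Ehom_rhom[OF g] Ehom_rhom[OF f] PP_rmodule]
    by (simp add: diff_diff_eq add.commute)
  moreover have "esigma n P (j - (a + b)) (ecomp b f g j y)
      = sgn_app (int n * (a + b)) (ecomp b f g (j - int n) (esigma n P j y))" for j y
  proof -
    let ?z = "g (j - int n) (esigma n P j y)"
    have z_mem: "?z \<in> PP n P (j - b - int n)"
      using Ehom_mem[OF g, of "j - int n"] by (simp add: algebra_simps)
    have "esigma n P (j - (a + b)) (f (j - b) (g j y))
        = sgn_app (int n * a) (f (j - b - int n) (esigma n P (j - b) (g j y)))"
      using f_comm[of "j - b"] by (simp add: algebra_simps)
    also have "\<dots> = sgn_app (int n * a) (f (j - b - int n) (sgn_app (int n * b) ?z))"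
      unfolding g_comm ..
    also have "\<dots> = sgn_app (int n * a + int n * b) (f (j - b - int n) ?z)"
      unfolding rhom_sgn_app[OF Ehom_rhom[OF f] PP_rmodule z_mem] sgn_app_add ..
    finally show ?thesis by (simp add: ecomp_def algebra_simps)
  qed
  ultimately show ?thesis by (simp add: sigE_iff)
qed

end

locale periodic_complex = periodic_graded_module n act P
  for n :: nat and act :: "'m::ab_group_add \<Rightarrow> 'r::ring_1 \<Rightarrow> 'm" and P :: "nat \<Rightarrow> 'm set" +
  fixes M :: "'m set" and d :: "nat \<Rightarrow> 'm \<Rightarrow> 'm" and \<alpha> \<beta> :: "'m \<Rightarrow> 'm"
  assumes M_rmodule: "rmodule M act"
    and d_rhom: "\<forall>i. 1 \<le> i \<and> i < n \<longrightarrow> rhom (P i) act (P (i - 1)) act (d i)"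
    and \<alpha>_rhom: "rhom (P 0) act M act \<alpha>"
    and \<beta>_rhom: "rhom M act (P (n - 1)) act \<beta>"
begin

lemma dP_rhom: "rhom (PP n P j) act (PP n P (j - 1)) act (dP n P d \<alpha> \<beta> j)"
proof (cases "j \<le> 0")
  case True
  then have "dP n P d \<alpha> \<beta> j = (\<lambda>x. 0)" by (simp add: dP_def[abs_def])
  then show ?thesis using rhom_const_zero[OF PP_rmodule] by simp
next
  case j_pos: False
  have n_pos': "int n > 0" using n_pos by simp
  define i where "i = nat (j mod int n)"
  have i_less: "i < n" using n_pos' unfolding i_def by (simp add: nat_less_iff)
  have PP_j: "PP n P j = P i" using j_pos by (simp add: PP_def i_def)
  show ?thesis
  proof (cases "j mod int n = 0")
    case False
    have "j mod int n \<ge> 1" using False pos_mod_sign[OF n_pos', of j] by linarith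
    then have i_pos: "1 \<le> i" unfolding i_def by simp
    have PP_j1: "PP n P (j - 1) = P (i - 1)"
      using j_pos mod_diff_1_nonzero[OF n_pos' False] False i_pos
      by (simp add: PP_def i_def nat_diff_distrib')
    have d_i: "rhom (P i) act (P (i - 1)) act (d i)" using d_rhom i_pos i_less by simp
    have "dP n P d \<alpha> \<beta> j = (\<lambda>x. sgn_app (int n * (j div int n)) (d i x))"
      using j_pos False d_i by (auto simp: dP_def[abs_def] PP_j i_def rhom_outside sgn_app_zero)
    then show ?thesis
      unfolding PP_j PP_j1 using rhom_sgn_app_fun[OF d_i] P_rmodule i_less by simp
  next
    case True
    have i0: "i = 0" using True i_def by simp
    have PP_j1: "PP n P (j - 1) = P (n - 1)"
      using j_pos mod_diff_1_zero[OF n_pos' True] by (simp add: PP_def nat_diff_distrib')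
    have d_0: "rhom (P 0) act (P (n - 1)) act (\<beta> \<circ> \<alpha>)"
      by (rule rhom_comp[OF \<alpha>_rhom \<beta>_rhom M_rmodule])
    have "\<beta> 0 = 0" using rhom_zero[OF \<beta>_rhom rmodule_zero_mem[OF M_rmodule]] .
    then have "dP n P d \<alpha> \<beta> j = (\<lambda>x. sgn_app (int n * (j div int n - 1)) ((\<beta> \<circ> \<alpha>) x))"
      using j_pos True \<alpha>_rhom by (auto simp: dP_def[abs_def] PP_j i0 rhom_outside sgn_app_zero)
    then show ?thesis
      unfolding PP_j PP_j1 i0 using rhom_sgn_app_fun[OF d_0] P_rmodule n_pos by simp
  qed
qed

lemma dP_mem: "dP n P d \<alpha> \<beta> j x \<in> PP n P (j - 1)"
  by (rule rhom_mem[OF dP_rhom rmodule_zero_mem[OF PP_rmodule]])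

lemma dP_zero: "dP n P d \<alpha> \<beta> j 0 = 0"
  by (rule rhom_zero[OF dP_rhom rmodule_zero_mem[OF PP_rmodule]])

lemma dP_diff_period:
  assumes "j > int n" "x \<in> PP n P j"
  shows "dP n P d \<alpha> \<beta> j x = sgn_app (int n) (dP n P d \<alpha> \<beta> (j - int n) x)"
proof -
  have "x \<in> PP n P (j - int n)" using assms PP_diff_period[of j] by simp
  moreover have "(j - int n) mod int n = j mod int n" by (simp add: mod_diff_right_eq[symmetric])
  moreover have "j div int n = (j - int n) div int n + 1" using n_pos by (simp add: div_diff_self)
  then have "int n * (j div int n) = int n + int n * ((j - int n) div int n)"
    and "int n * (j div int n - 1) = int n + int n * ((j - int n) div int n - 1)"
    by (simp_all add: algebra_simps)
  moreover have "j > 0" "j - int n > 0" using assms n_pos by auto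
  ultimately show ?thesis using assms unfolding dP_def by (simp add: sgn_app_add)
qed

lemma esigma_dP: "esigma n P (j - 1) (dP n P d \<alpha> \<beta> j x)
    = sgn_app (int n) (dP n P d \<alpha> \<beta> (j - int n) (esigma n P j x))"
proof (cases "x \<in> PP n P j \<and> j > int n")
  case True
  then show ?thesis using dP_mem[of j x] dP_diff_period[of j x] by (simp add: esigma_def)
next
  case False
  have "esigma n P (j - 1) (dP n P d \<alpha> \<beta> j x) = 0"
    using False by (auto simp: esigma_def dP_def)
  moreover have "dP n P d \<alpha> \<beta> (j - int n) (esigma n P j x) = 0"
  proof (cases "x \<in> PP n P j")
    case True
    with False show ?thesis by (simp add: dP_def)
  next
    case False
    then show ?thesis by (simp add: esigma_def dP_zero)
  qed
  ultimately show ?thesis by (simp add: sgn_app_zero)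
qed

lemma edelta_Ehom:
  assumes f: "Ehom n act P e f"
  shows "Ehom n act P (e + 1) (edelta n P d \<alpha> \<beta> e f)"
  unfolding Ehom_def
proof
  fix j
  have "rhom (PP n P j) act (PP n P (j - (e + 1))) act (dP n P d \<alpha> \<beta> (j - e) \<circ> f j)"
    using rhom_comp[OF Ehom_rhom[OF f] dP_rhom PP_rmodule] by (simp add: diff_diff_eq)
  moreover have "rhom (PP n P j) act (PP n P (j - (e + 1))) act (f (j - 1) \<circ> dP n P d \<alpha> \<beta> j)"
    using rhom_comp[OF dP_rhom Ehom_rhom[OF f] PP_rmodule] by (simp add: algebra_simps)
  ultimately show "rhom (PP n P j) act (PP n P (j - (e + 1))) act (edelta n P d \<alpha> \<beta> e f j)"
    using rhom_diff_fun[OF _ rhom_sgn_app_fun[OF _ PP_rmodule] PP_rmodule]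
    by (simp add: edelta_def[abs_def] comp_def)
qed

lemma esigma_edelta:
  assumes f: "Ehom n act P e f"
    and f_comm: "\<And>j x. esigma n P (j - e) (f j x) = sgn_app (int n * e) (f (j - int n) (esigma n P j x))"
  shows "esigma n P (j - (e + 1)) (edelta n P d \<alpha> \<beta> e f j x)
       = sgn_app (int n * (e + 1)) (edelta n P d \<alpha> \<beta> e f (j - int n) (esigma n P j x))"
proof -
  let ?D = "dP n P d \<alpha> \<beta>" and ?S = "esigma n P" and ?s = "sgn_app (int n * (e + 1))"
  define z where "z = ?S j x"
  have d_part: "?S (j - e - 1) (?D (j - e) (f j x)) = ?s (?D (j - int n - e) (f (j - int n) z))"
  proof -
    have fz_mem: "f (j - int n) z \<in> PP n P (j - e - int n)"
      using Ehom_mem[OF f, of "j - int n" z] by (simp add: algebra_simps)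
    have "?S (j - e - 1) (?D (j - e) (f j x)) = sgn_app (int n) (?D (j - e - int n) (?S (j - e) (f j x)))"
      by (rule esigma_dP)
    also have "\<dots> = sgn_app (int n) (?D (j - e - int n) (sgn_app (int n * e) (f (j - int n) z)))"
      unfolding f_comm z_def ..
    also have "\<dots> = sgn_app (int n + int n * e) (?D (j - e - int n) (f (j - int n) z))"
      unfolding rhom_sgn_app[OF dP_rhom PP_rmodule fz_mem] sgn_app_add ..
    finally show ?thesis by (simp add: algebra_simps)
  qed
  have f_part: "?S (j - e - 1) (sgn_app e (f (j - 1) (?D j x)))
      = ?s (sgn_app e (f (j - int n - 1) (?D (j - int n) z)))"
  proof -
    have "?S (j - e - 1) (sgn_app e (f (j - 1) (?D j x))) = sgn_app e (?S (j - 1 - e) (f (j - 1) (?D j x)))"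
      using rhom_sgn_app[OF esigma_rhom PP_rmodule Ehom_mem[OF f, of "j - 1"]]
      by (simp add: algebra_simps)
    also have "\<dots> = sgn_app e (sgn_app (int n * e) (f (j - int n - 1) (sgn_app (int n) (?D (j - int n) z))))"
      unfolding f_comm esigma_dP z_def by (simp add: algebra_simps)
    also have "\<dots> = sgn_app (e + int n * e + int n) (f (j - int n - 1) (?D (j - int n) z))"
      unfolding rhom_sgn_app[OF Ehom_rhom[OF f] PP_rmodule dP_mem] sgn_app_add ..
    also have "\<dots> = ?s (sgn_app e (f (j - int n - 1) (?D (j - int n) z)))"
      unfolding sgn_app_add[symmetric] by (rule sgn_app_cong_parity) (simp add: algebra_simps)
    finally show ?thesis .
  qed
  have "sgn_app e (f (j - 1) (?D j x)) \<in> PP n P (j - e - 1)"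
    using sgn_app_mem[OF PP_rmodule Ehom_mem[OF f, of "j - 1"]] by (simp add: algebra_simps)
  then have "?S (j - (e + 1)) (edelta n P d \<alpha> \<beta> e f j x)
      = ?S (j - e - 1) (?D (j - e) (f j x)) - ?S (j - e - 1) (sgn_app e (f (j - 1) (?D j x)))"
    unfolding edelta_def diff_diff_eq[symmetric]
    by (rule rhom_diff[OF esigma_rhom PP_rmodule dP_mem])
  also have "\<dots> = ?s (edelta n P d \<alpha> \<beta> e f (j - int n) z)"
    unfolding d_part f_part edelta_def sgn_app_minus by (simp add: algebra_simps)
  finally show ?thesis unfolding z_def .
qed

lemma sigE_edelta:
  assumes "f \<in> sigE n act P e"
  shows "edelta n P d \<alpha> \<beta> e f \<in> sigE n act P (e + 1)"
  using assms edelta_Ehom esigma_edelta unfolding sigE_iff by blast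

end

theorem lemma2p7:
  fixes \<iota> :: "'k::field \<Rightarrow> 'r::ring_1"
    and act :: "'m::ab_group_add \<Rightarrow> 'r \<Rightarrow> 'm"
    and M :: "'m set" and P :: "nat \<Rightarrow> 'm set"
    and d :: "nat \<Rightarrow> 'm \<Rightarrow> 'm" and \<alpha> \<beta> :: "'m \<Rightarrow> 'm"
    and n :: nat
  assumes n: "n \<ge> 1"
    and alg: "k_algebra \<iota>"
    and Mmod: "rmodule M act"
    and Pproj: "\<forall>i<n. fg_projective (P i) act"
    and dhom: "\<forall>i. 1 \<le> i \<and> i < n \<longrightarrow> rhom (P i) act (P (i - 1)) act (d i)"
    and \<alpha>hom: "rhom (P 0) act M act \<alpha>"
    and \<beta>hom: "rhom M act (P (n - 1)) act \<beta>"
    and exact: "exact_data n act M P d \<alpha> \<beta>"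
  shows
    \<comment> \<open>(1)\<close>
    "(\<forall>e x. x \<in> sigE n act P e \<longrightarrow>
        ecomp (e + 1) (esigma n P) (edelta n P d \<alpha> \<beta> e x)
          = esgn (int n * (e + 1)) (ecomp (int n) (edelta n P d \<alpha> \<beta> e x) (esigma n P)))
     \<comment> \<open>(2): sigma-E is a DG-subalgebra of E-cal\<close>
     \<and> (\<forall>e. sigE n act P e \<subseteq> {f. Ehom n act P e f})
     \<and> (\<forall>e. ezero \<in> sigE n act P e)
     \<and> (\<forall>e f g. f \<in> sigE n act P e \<and> g \<in> sigE n act P e \<longrightarrow> eadd f g \<in> sigE n act P e)
     \<and> (\<forall>e c f. f \<in> sigE n act P e \<longrightarrow> esmult act \<iota> c f \<in> sigE n act P e)
     \<and> eid n P \<in> sigE n act P 0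
     \<and> (\<forall>a b f g. f \<in> sigE n act P a \<and> g \<in> sigE n act P b \<longrightarrow> ecomp b f g \<in> sigE n act P (a + b))
     \<and> (\<forall>e f. f \<in> sigE n act P e \<longrightarrow> edelta n P d \<alpha> \<beta> e f \<in> sigE n act P (e + 1))"
proof -
  have "\<forall>i<n. rmodule (P i) act" using Pproj by (simp add: fg_projective_def)
  then interpret periodic_complex n act P M d \<alpha> \<beta>
    using n Mmod dhom \<alpha>hom \<beta>hom by unfold_locales auto
  have "ecomp (e + 1) (esigma n P) (edelta n P d \<alpha> \<beta> e x)
      = esgn (int n * (e + 1)) (ecomp (int n) (edelta n P d \<alpha> \<beta> e x) (esigma n P))"
    if "x \<in> sigE n act P e" for e x
    using that esigma_edelta[of e x] by (simp add: sigE_iff ecomp_def esgn_def fun_eq_iff)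
  then show ?thesis
    using sigE_ezero sigE_eadd sigE_esmult[OF alg] sigE_eid sigE_ecomp sigE_edelta
    by (auto simp: sigE_iff)
qed

end
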